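(* In the Standing Setting, let $r^*=r/(r,\lambda)$ and $\lambda^*=\lambda/(r,\lambda)$. Then (i) $r^*=2(\omega-1)$; (ii) $k=\frac{\lambda^*(\omega+1)}{2}+1$; (iii) $b<4v$.
   Context: Standing Setting: $\mathcal{D}=(\Omega,\mathcal{B})$ is a non-trivial $2$-$(v,k,\lambda)$ design (every two distinct points in exactly $\lambda$ blocks, blocks of size $k$, $2<k<v$) with $b$ blocks and replication number $r$, satisfying $\lambda\ge (r,\lambda)^2$. $G\le\mathrm{Aut}(\mathcal{D})$ is flag-transitive (transitive on pairs $(p,B)$ with $p\in B\in\mathcal{B}$). Moreover $\Omega=\Delta\times\Delta$ with $|\Delta|=\omega\ge 5$ odd, so $v=\omega^2$, and $T\times T\trianglelefteq G\le T_0\wr \mathbb{Z}_2$ acting in product action (the $\mathbb{Z}_2$ interchanging the two coordinates), where $T_0\le\mathrm{Sym}(\Delta)$ is $2$-transitive with nonabelian simple socle $T$; $G$ has rank $3$ on $\Omega$. *)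

theory Defs
  imports "HOL-Algebra.Algebra"
begin

abbreviation perm_sub :: "'a set \<Rightarrow> ('a \<Rightarrow> 'a) set \<Rightarrow> ('a \<Rightarrow> 'a) monoid" where
  "perm_sub S H \<equiv> (BijGroup S)\<lparr>carrier := H\<rparr>"

definition minimal_normal :: "('g, 'b) monoid_scheme \<Rightarrow> 'g set \<Rightarrow> bool" where
  "minimal_normal G N \<longleftrightarrow> N \<lhd> G \<and> N \<noteq> {\<one>\<^bsub>G\<^esub>} \<and>
     (\<forall>M. M \<lhd> G \<and> M \<subseteq> N \<longrightarrow> M = {\<one>\<^bsub>G\<^esub>} \<or> M = N)"

definition socle :: "('g, 'b) monoid_scheme \<Rightarrow> 'g set" where
  "socle G = generate G (\<Union>{N. minimal_normal G N})"

definition two_transitive :: "'a set \<Rightarrow> ('a \<Rightarrow> 'a) set \<Rightarrow> bool" where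
  "two_transitive D H \<longleftrightarrow> (\<forall>a\<in>D. \<forall>b\<in>D. \<forall>c\<in>D. \<forall>d\<in>D. a \<noteq> b \<longrightarrow> c \<noteq> d \<longrightarrow>
     (\<exists>g\<in>H. g a = c \<and> g b = d))"

definition prod_perm :: "'a set \<Rightarrow> ('a \<Rightarrow> 'a) \<Rightarrow> ('a \<Rightarrow> 'a) \<Rightarrow> ('a \<times> 'a \<Rightarrow> 'a \<times> 'a)" where
  "prod_perm D g h = restrict (\<lambda>(x, y). (g x, h y)) (D \<times> D)"

definition swap_perm :: "'a set \<Rightarrow> ('a \<Rightarrow> 'a) \<Rightarrow> ('a \<Rightarrow> 'a) \<Rightarrow> ('a \<times> 'a \<Rightarrow> 'a \<times> 'a)" where
  "swap_perm D g h = restrict (\<lambda>(x, y). (g y, h x)) (D \<times> D)"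

definition base_group :: "'a set \<Rightarrow> ('a \<Rightarrow> 'a) set \<Rightarrow> ('a \<times> 'a \<Rightarrow> 'a \<times> 'a) set" where
  "base_group D T = {prod_perm D g h | g h. g \<in> T \<and> h \<in> T}"

text \<open>T0 wr Z2 in product action (the Z2 interchanging the coordinates)\<close>
definition wreath_prod_action :: "'a set \<Rightarrow> ('a \<Rightarrow> 'a) set \<Rightarrow> ('a \<times> 'a \<Rightarrow> 'a \<times> 'a) set" where
  "wreath_prod_action D T0 = base_group D T0 \<union> {swap_perm D g h | g h. g \<in> T0 \<and> h \<in> T0}"

definition orbital :: "('p \<Rightarrow> 'p) set \<Rightarrow> 'p \<times> 'p \<Rightarrow> ('p \<times> 'p) set" where
  "orbital G pq = {(g (fst pq), g (snd pq)) | g. g \<in> G}"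

definition transitive_on :: "('p \<Rightarrow> 'p) set \<Rightarrow> 'p set \<Rightarrow> bool" where
  "transitive_on G \<Omega> \<longleftrightarrow> (\<forall>p\<in>\<Omega>. \<forall>q\<in>\<Omega>. \<exists>g\<in>G. g p = q)"

definition has_rank :: "('p \<Rightarrow> 'p) set \<Rightarrow> 'p set \<Rightarrow> nat \<Rightarrow> bool" where
  "has_rank G \<Omega> n \<longleftrightarrow> transitive_on G \<Omega> \<and> card (orbital G ` (\<Omega> \<times> \<Omega>)) = n"

definition design_2 :: "'p set \<Rightarrow> 'p set set \<Rightarrow> nat \<Rightarrow> nat \<Rightarrow> nat \<Rightarrow> bool" where
  "design_2 P Bl v k lam \<longleftrightarrow> finite P \<and> card P = v \<and> (\<forall>blk\<in>Bl. blk \<subseteq> P \<and> card blk = k)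
     \<and> 2 < k \<and> k < v \<and> lam > 0
     \<and> (\<forall>x\<in>P. \<forall>y\<in>P. x \<noteq> y \<longrightarrow> card {blk\<in>Bl. x \<in> blk \<and> y \<in> blk} = lam)"

definition design_aut :: "'p set \<Rightarrow> 'p set set \<Rightarrow> ('p \<Rightarrow> 'p) \<Rightarrow> bool" where
  "design_aut P Bl g \<longleftrightarrow> bij_betw g P P \<and> (\<lambda>blk. g ` blk) ` Bl = Bl"

definition flag_transitive :: "'p set \<Rightarrow> 'p set set \<Rightarrow> ('p \<Rightarrow> 'p) set \<Rightarrow> bool" where
  "flag_transitive P Bl G \<longleftrightarrow> (\<forall>p blk q blk2. blk \<in> Bl \<and> p \<in> blk \<and> blk2 \<in> Bl \<and> q \<in> blk2 \<longrightarrow>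
     (\<exists>g\<in>G. g p = q \<and> g ` blk = blk2))"

end

theory Submission
  imports Defs "HOL-Analysis.Convex"
begin

text \<open>
  Counting pairs (block, point) with a variance argument on the intersection numbers of a fixed
  block gives Fisher's bound \<open>k \<le> r\<close>, hence \<open>r\<^sup>2 > \<lambda> v\<close>; with \<open>\<lambda> \<ge> (r,\<lambda>)\<^sup>2\<close> this becomes
  \<open>r\<^sup>* > \<omega>\<close>. On the other hand, the stabiliser of a point \<open>x\<close> in \<open>T\<^sub>0 \<wr> Z\<^sub>2\<close> fixes the
  set of the \<open>2(\<omega> - 1)\<close> points sharing exactly one coordinate with \<open>x\<close>; by flag-transitivity
  every block through \<open>x\<close> meets it in the same number of points, so \<open>r\<close> divides
  \<open>2(\<omega> - 1)\<lambda>\<close> and \<open>r\<^sup>*\<close> divides \<open>2(\<omega> - 1) < 2r\<^sup>*\<close>. Thus \<open>r\<^sup>* = 2(\<omega> - 1)\<close>, and (ii), (iii)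
  follow from \<open>r(k - 1) = \<lambda>(v - 1)\<close> and \<open>bk = vr\<close>.
\<close>

lemma sum_card_Int_eq_sum_card_incident:
  assumes "finite S" "finite A"
  shows "(\<Sum>B\<in>S. card (f B \<inter> A)) = (\<Sum>x\<in>A. card {B\<in>S. x \<in> f B})"
proof -
  have "card (f B \<inter> A) = (\<Sum>x\<in>A. if x \<in> f B then 1 else 0)" for B
    using assms(2) by (simp add: sum.If_cases Int_commute)
  moreover have "card {B\<in>S. x \<in> f B} = (\<Sum>B\<in>S. if x \<in> f B then 1 else 0)" for x
    using assms(1) by (simp add: sum.If_cases Collect_conj_eq Int_commute Collect_mem_eq)
  ultimately show ?thesis
    by (simp add: sum.swap[where A = S])
qed

lemma div_gcd_dvd_of_dvd_mult:
  fixes r lam n :: nat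
  assumes "r dvd lam * n" "0 < lam"
  shows "r div gcd r lam dvd n"
proof -
  define g where "g = gcd r lam"
  have "0 < g" using assms(2) by (simp add: g_def)
  moreover have "r div g * g dvd lam div g * n * g"
    using assms(1) by (simp add: g_def mult.commute mult.left_commute)
  ultimately have "r div g dvd lam div g * n"
    by simp
  moreover have "coprime (r div g) (lam div g)"
    using assms(2) by (simp add: g_def div_gcd_coprime)
  ultimately show ?thesis
    by (simp add: g_def coprime_dvd_mult_right_iff)
qed

lemma dvd_eq_of_less_double:
  fixes m n :: nat
  assumes "m dvd n" "0 < n" "n < 2 * m"
  shows "m = n"
proof -
  obtain c where "n = m * c" using assms(1) by blast
  have "c \<noteq> 0" using assms(2) \<open>n = m * c\<close> by auto
  moreover have "\<not> 2 \<le> c"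
  proof
    assume "2 \<le> c"
    then have "m * 2 \<le> m * c" by simp
    with \<open>n = m * c\<close> assms(3) show False by linarith
  qed
  ultimately have "c = 1" by linarith
  with \<open>n = m * c\<close> show ?thesis by simp
qed

lemma cancel_pred_sq_pred:
  fixes w a b :: nat
  assumes "a * (w - 1) = b * (w * w - 1)" "1 < w"
  shows "a = b * (w + 1)"
proof -
  have "w * w - 1 = (w + 1) * (w - 1)"
    using assms(2) by (cases w) simp_all
  with assms(1) have "a * (w - 1) = b * (w + 1) * (w - 1)"
    by (simp only: mult.assoc)
  with assms(2) show ?thesis by simp
qed

text \<open>
  After multiplication by \<open>v - 1\<close> and substitution of the two design equations, the slack of the
  bound is \<open>(r - k) r (v - k)\<^sup>2\<close>.
\<close>
lemma block_size_le_replication_of_variance_bound: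
  fixes b v k r lam :: real
  assumes bk: "b * k = v * r" and rk: "r * (k - 1) = lam * (v - 1)"
    and k: "1 < k" and vk: "k < v" and r: "0 < r"
    and bound: "(k * (r - 1))^2 \<le> (k * (r - 1) + k * (k - 1) * (lam - 1)) * (b - 1)"
  shows "k \<le> r"
proof -
  have "k * (k * (r - 1)^2) \<le> k * ((b - 1) * ((r - 1) + (k - 1) * (lam - 1)))"
    using bound by (simp add: power2_eq_square algebra_simps)
  then have "k * (r - 1)^2 \<le> (b - 1) * ((r - 1) + (k - 1) * (lam - 1))"
    using k by simp
  then have "k * (v - 1) * (k * (r - 1)^2) \<le> k * (v - 1) * ((b - 1) * ((r - 1) + (k - 1) * (lam - 1)))"
    using k vk by (intro mult_left_mono) auto
  also have "\<dots> = (b * k - k) * ((v - 1) * (r - k) + (k - 1) * (lam * (v - 1)))"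
    by (simp add: algebra_simps)
  also have "\<dots> = (v * r - k) * ((v - 1) * (r - k) + (k - 1) * (r * (k - 1)))"
    by (simp add: bk rk)
  finally have "0 \<le> (v * r - k) * ((v - 1) * (r - k) + (k - 1) * (r * (k - 1))) - k * (v - 1) * (k * (r - 1)^2)"
    by simp
  also have "\<dots> = (r - k) * (r * (v - k)^2)"
    by (simp add: algebra_simps power2_eq_square)
  finally have "0 \<le> (r - k) * (r * (v - k)^2)" .
  moreover have "0 < r * (v - k)^2" using r vk by simp
  ultimately show ?thesis by (simp add: zero_le_mult_iff)
qed

locale replicated_design =
  fixes P :: "'p set" and Bl :: "'p set set" and v k lam r :: nat
  assumes design: "design_2 P Bl v k lam"
    and replication: "\<And>x. x \<in> P \<Longrightarrow> card {B\<in>Bl. x \<in> B} = r"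
begin

lemma finite_points: "finite P"
  and card_points: "card P = v"
  and block_subset: "B \<in> Bl \<Longrightarrow> B \<subseteq> P"
  and card_block: "B \<in> Bl \<Longrightarrow> card B = k"
  and two_less_block_size: "2 < k"
  and block_size_less: "k < v"
  and lam_pos: "0 < lam"
  and pair_replication: "x \<in> P \<Longrightarrow> y \<in> P \<Longrightarrow> x \<noteq> y \<Longrightarrow> card {B\<in>Bl. x \<in> B \<and> y \<in> B} = lam"
  using design unfolding design_2_def by auto

lemma points_nonempty: "P \<noteq> {}"
  using card_points block_size_less by auto

lemma finite_blocks: "finite Bl"
  using finite_points block_subset by (intro finite_subset[of Bl "Pow P"]) auto

lemma finite_block: "B \<in> Bl \<Longrightarrow> finite B"
  using finite_points block_subset finite_subset by blast

lemma exists_block_through: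
  assumes x: "x \<in> P"
  shows "\<exists>B\<in>Bl. x \<in> B"
proof -
  have "card (P - {x}) \<noteq> 0"
    using x finite_points card_points two_less_block_size block_size_less by simp
  then have "P - {x} \<noteq> {}" by (metis card.empty)
  then obtain y where y: "y \<in> P" "x \<noteq> y" by blast
  then have "{B\<in>Bl. x \<in> B \<and> y \<in> B} \<noteq> {}"
    using pair_replication[OF x y] lam_pos by fastforce
  then show ?thesis by blast
qed

lemma replication_pos: "0 < r"
proof -
  obtain x where x: "x \<in> P"
    using points_nonempty by blast
  then have "{B\<in>Bl. x \<in> B} \<noteq> {}"
    using exists_block_through by blast
  moreover have "finite {B\<in>Bl. x \<in> B}"
    using finite_blocks by simp
  ultimately show ?thesis
    using replication[OF x] card_gt_0_iff by metis
qed

lemma card_blocks_mult_block_size: "card Bl * k = v * r"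
proof -
  have "card Bl * k = (\<Sum>B\<in>Bl. card (B \<inter> P))"
    using card_block block_subset by (simp add: Int_absorb2)
  also have "\<dots> = (\<Sum>x\<in>P. card {B\<in>Bl. x \<in> B})"
    using sum_card_Int_eq_sum_card_incident[OF finite_blocks finite_points, of id] by simp
  also have "\<dots> = v * r"
    using replication card_points by simp
  finally show ?thesis .
qed

lemma replication_mult_eq: "r * (k - 1) = lam * (v - 1)"
proof -
  obtain x where x: "x \<in> P"
    using points_nonempty by blast
  let ?X = "{B\<in>Bl. x \<in> B}"
  have "r * (k - 1) = (\<Sum>B\<in>?X. card (B \<inter> (P - {x})))"
  proof -
    have "card (B \<inter> (P - {x})) = k - 1" if "B \<in> ?X" for B
    proof -
      have "B \<inter> (P - {x}) = B - {x}"
        using that block_subset by auto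
      then show ?thesis
        using that card_block finite_block by simp
    qed
    then show ?thesis
      using replication[OF x] by simp
  qed
  also have "\<dots> = (\<Sum>y\<in>P - {x}. card {B\<in>?X. y \<in> B})"
    using sum_card_Int_eq_sum_card_incident[of ?X "P - {x}" id] finite_blocks finite_points
    by simp
  also have "\<dots> = (\<Sum>y\<in>P - {x}. lam)"
  proof (rule sum.cong[OF refl])
    fix y assume "y \<in> P - {x}"
    moreover have "{B\<in>?X. y \<in> B} = {B\<in>Bl. x \<in> B \<and> y \<in> B}" by auto
    ultimately show "card {B\<in>?X. y \<in> B} = lam"
      using x pair_replication[of x y] by auto
  qed
  also have "\<dots> = lam * (v - 1)"
    using x finite_points card_points by simp
  finally show ?thesis .
qed

lemma sum_card_Int_block:
  assumes "B0 \<in> Bl"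
  shows "(\<Sum>B\<in>Bl - {B0}. card (B \<inter> B0)) = k * (r - 1)"
proof -
  have "card {B\<in>Bl - {B0}. x \<in> B} = r - 1" if "x \<in> B0" for x
  proof -
    have "{B\<in>Bl - {B0}. x \<in> B} = {B\<in>Bl. x \<in> B} - {B0}" by auto
    then show ?thesis
      using that assms block_subset replication finite_blocks by auto
  qed
  moreover have "(\<Sum>B\<in>Bl - {B0}. card (id B \<inter> B0)) = (\<Sum>x\<in>B0. card {B\<in>Bl - {B0}. x \<in> id B})"
    using finite_blocks finite_block assms by (intro sum_card_Int_eq_sum_card_incident) auto
  ultimately show ?thesis
    using card_block[OF assms] by simp
qed

lemma sum_card_Int_block_sq:
  assumes B0: "B0 \<in> Bl"
  shows "(\<Sum>B\<in>Bl - {B0}. (card (B \<inter> B0))^2) = k * (r - 1) + k * (k - 1) * (lam - 1)"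
proof -
  let ?S = "Bl - {B0}" and ?diag = "{p \<in> B0 \<times> B0. fst p = snd p}"
  have fin: "finite (B0 \<times> B0)" using finite_block[OF B0] by simp
  have count: "card {B\<in>?S. p \<in> B \<times> B} = (if p \<in> ?diag then r - 1 else lam - 1)"
    if "p \<in> B0 \<times> B0" for p
  proof -
    obtain x y where p: "p = (x, y)" by (cases p)
    with that B0 block_subset have "x \<in> P" "y \<in> P" by auto
    have "{B\<in>?S. p \<in> B \<times> B} = {B\<in>Bl. x \<in> B \<and> y \<in> B} - {B0}"
      using p by auto
    then show ?thesis
      using that p \<open>x \<in> P\<close> \<open>y \<in> P\<close> B0 replication pair_replication finite_blocks by auto
  qed
  have card_diag: "card ?diag = k"
  proof -
    have "?diag = (\<lambda>x. (x, x)) ` B0" by auto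
    then show ?thesis using card_block[OF B0] by (simp add: card_image inj_on_def)
  qed
  have "(\<Sum>B\<in>?S. (card (B \<inter> B0))^2) = (\<Sum>B\<in>?S. card ((B \<times> B) \<inter> (B0 \<times> B0)))"
    by (simp add: power2_eq_square Times_Int_Times card_cartesian_product)
  also have "\<dots> = (\<Sum>p\<in>B0 \<times> B0. card {B\<in>?S. p \<in> B \<times> B})"
    using finite_blocks fin by (intro sum_card_Int_eq_sum_card_incident) auto
  also have "\<dots> = (\<Sum>p\<in>B0 \<times> B0. if p \<in> ?diag then r - 1 else lam - 1)"
    using count by (rule sum.cong[OF refl])
  also have "\<dots> = card ?diag * (r - 1) + card (B0 \<times> B0 - ?diag) * (lam - 1)"
  proof -
    have "B0 \<times> B0 \<inter> {p. p \<in> ?diag} = ?diag" "B0 \<times> B0 \<inter> - {p. p \<in> ?diag} = B0 \<times> B0 - ?diag"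
      by auto
    then show ?thesis
      using sum.If_cases[OF fin, of "\<lambda>p. p \<in> ?diag" "\<lambda>_. r - 1" "\<lambda>_. lam - 1"] by simp
  qed
  also have "card (B0 \<times> B0 - ?diag) = k * (k - 1)"
    using fin card_diag card_block[OF B0]
    by (simp add: card_Diff_subset card_cartesian_product diff_mult_distrib2)
  finally show ?thesis using card_diag by simp
qed

lemma intersection_numbers_bound:
  assumes B0: "B0 \<in> Bl"
  shows "(real k * (real r - 1))^2
    \<le> (real k * (real r - 1) + real k * (real k - 1) * (real lam - 1)) * (real (card Bl) - 1)"
proof -
  let ?S = "Bl - {B0}" and ?n = "\<lambda>B. real (card (B \<inter> B0))"
  have "(\<Sum>B\<in>?S. ?n B * 1)^2 \<le> (\<Sum>B\<in>?S. (?n B)^2) * (\<Sum>B\<in>?S. 1^2)"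
    by (rule Cauchy_Schwarz_ineq_sum)
  also have "(\<Sum>B\<in>?S. ?n B * 1) = real (k * (r - 1))"
    using sum_card_Int_block[OF B0] by (simp flip: of_nat_sum)
  also have "(\<Sum>B\<in>?S. (?n B)^2) = real (k * (r - 1) + k * (k - 1) * (lam - 1))"
    using sum_card_Int_block_sq[OF B0] by (simp flip: of_nat_sum of_nat_power)
  also have "(\<Sum>B\<in>?S. 1^2) = real (card Bl) - 1"
  proof -
    have "1 \<le> card Bl"
      using B0 finite_blocks by (metis One_nat_def Suc_leI card_gt_0_iff empty_iff)
    then show ?thesis
      using B0 finite_blocks by (simp add: of_nat_diff)
  qed
  finally have "(real (k * (r - 1)))^2
      \<le> real (k * (r - 1) + k * (k - 1) * (lam - 1)) * (real (card Bl) - 1)" .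
  moreover have "real (k * (r - 1)) = real k * (real r - 1)"
    using replication_pos by (simp add: of_nat_diff)
  moreover have "real (k * (k - 1) * (lam - 1)) = real k * (real k - 1) * (real lam - 1)"
    using two_less_block_size lam_pos by (simp add: of_nat_diff)
  ultimately show ?thesis
    by (simp only: of_nat_add)
qed

lemma block_size_le_replication: "k \<le> r"
proof -
  obtain x where "x \<in> P"
    using points_nonempty by blast
  then obtain B0 where B0: "B0 \<in> Bl"
    using exists_block_through by blast
  have "real (card Bl) * real k = real v * real r"
    using card_blocks_mult_block_size by (metis of_nat_mult)
  moreover have "real r * (real k - 1) = real lam * (real v - 1)"
  proof -
    have "real (r * (k - 1)) = real (lam * (v - 1))"
      using replication_mult_eq by simp
    then show ?thesis
      using two_less_block_size block_size_less by (simp add: of_nat_diff)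
  qed
  moreover have "1 < real k" "real k < real v" "0 < real r"
    using two_less_block_size block_size_less replication_pos by simp_all
  ultimately have "real k \<le> real r"
    using intersection_numbers_bound[OF B0] by (rule block_size_le_replication_of_variance_bound)
  then show ?thesis by simp
qed

lemma lam_less_replication: "lam < r"
proof (rule ccontr)
  assume "\<not> lam < r"
  then have "r * (k - 1) \<le> lam * (k - 1)" by simp
  also have "\<dots> < lam * (v - 1)"
    using lam_pos two_less_block_size block_size_less by simp
  finally show False
    using replication_mult_eq by simp
qed

lemma reduced_parameters:
  obtains g r' lam' where "gcd r lam = g" "0 < g" "r = g * r'" "lam = g * lam'"
    and "r div gcd r lam = r'" "lam div gcd r lam = lam'"
proof -
  define g where "g = gcd r lam"
  have "0 < g" using lam_pos by (simp add: g_def)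
  obtain r' lam' where r': "r = g * r'" and lam': "lam = g * lam'"
    unfolding g_def by (meson dvd_def gcd_dvd1 gcd_dvd2)
  have "r div gcd r lam = r'" "lam div gcd r lam = lam'"
    unfolding g_def[symmetric] using \<open>0 < g\<close> r' lam' by simp_all
  with that g_def \<open>0 < g\<close> r' lam' show ?thesis by blast
qed

lemma reduced_replication_mult_eq:
  "r div gcd r lam * (k - 1) = lam div gcd r lam * (v - 1)"
proof -
  obtain g r' lam' where g: "0 < g" "r = g * r'" "lam = g * lam'"
    and reduced: "r div gcd r lam = r'" "lam div gcd r lam = lam'"
    by (rule reduced_parameters)
  have "r' * (k - 1) = lam' * (v - 1)"
    using replication_mult_eq g by simp
  then show ?thesis unfolding reduced .
qed

lemma card_points_less_reduced_replication_sq: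
  assumes "(gcd r lam)^2 \<le> lam"
  shows "v < (r div gcd r lam)^2"
proof -
  obtain g r' lam' where g: "gcd r lam = g" "0 < g" "r = g * r'" "lam = g * lam'"
    and reduced: "r div gcd r lam = r'"
    by (rule reduced_parameters)
  have "lam * v = lam * (v - 1) + lam"
    using block_size_less by (cases v) simp_all
  also have "\<dots> < r * (k - 1) + r"
    using replication_mult_eq lam_less_replication by simp
  also have "\<dots> = r * k"
    using two_less_block_size by (cases k) simp_all
  also have "\<dots> \<le> r * r"
    using block_size_le_replication by simp
  finally have "lam * v < r * r" .
  moreover have "g \<le> lam'"
    using assms g(2,4) unfolding g(1) by (simp add: power2_eq_square)
  then have "g * g * v \<le> lam * v"
    using g(4) by simp
  moreover have "r * r = g * g * (r' * r')"
    using g(3) by simp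
  ultimately have "g * g * v < g * g * (r' * r')"
    by linarith
  then show ?thesis
    using g(2) unfolding reduced by (simp add: power2_eq_square)
qed

lemma replication_le_reduced_product:
  assumes "(gcd r lam)^2 \<le> lam"
  shows "r \<le> r div gcd r lam * (lam div gcd r lam)"
proof -
  obtain g r' lam' where g: "gcd r lam = g" "0 < g" "r = g * r'" "lam = g * lam'"
    and reduced: "r div gcd r lam = r'" "lam div gcd r lam = lam'"
    by (rule reduced_parameters)
  have "g \<le> lam'"
    using assms g(2,4) unfolding g(1) by (simp add: power2_eq_square)
  then show ?thesis
    using g(3) unfolding reduced by simp
qed

lemma card_blocks_less_of_replication_less:
  assumes "r < c * k"
  shows "card Bl < c * v"
proof -
  have "card Bl * k = v * r"
    by (rule card_blocks_mult_block_size)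
  also have "\<dots> < c * v * k"
    using assms block_size_less by simp
  finally show ?thesis by simp
qed

lemma reduced_replication_eq_of_dvd:
  assumes "v = w * w" "1 < w" "(gcd r lam)^2 \<le> lam" "r dvd lam * (2 * (w - 1))"
  shows "r div gcd r lam = 2 * (w - 1)"
proof (rule dvd_eq_of_less_double)
  show "r div gcd r lam dvd 2 * (w - 1)"
    using assms(4) lam_pos by (rule div_gcd_dvd_of_dvd_mult)
  show "0 < 2 * (w - 1)"
    using assms(2) by simp
  have "w < r div gcd r lam"
    using card_points_less_reduced_replication_sq[OF assms(3)] assms(1)
    by (metis power2_eq_square power_less_imp_less_base zero_le)
  then show "2 * (w - 1) < 2 * (r div gcd r lam)"
    by simp
qed

lemma block_size_eq_of_reduced_replication:
  assumes "v = w * w" "1 < w" "r div gcd r lam = 2 * (w - 1)"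
  shows "2 * (k - 1) = lam div gcd r lam * (w + 1)"
  using reduced_replication_mult_eq assms(2) unfolding assms(1,3)
  by (intro cancel_pred_sq_pred) (auto simp: ac_simps)

lemma card_blocks_less_four_mult:
  assumes "v = w * w" "1 < w" "(gcd r lam)^2 \<le> lam" "r div gcd r lam = 2 * (w - 1)"
  shows "card Bl < 4 * v"
proof (rule card_blocks_less_of_replication_less)
  have k: "2 * (k - 1) = lam div gcd r lam * (w + 1)"
    using assms(1,2,4) by (rule block_size_eq_of_reduced_replication)
  have "r \<le> 2 * (w - 1) * (lam div gcd r lam)"
    using replication_le_reduced_product[OF assms(3)] unfolding assms(4) .
  also have "\<dots> < 2 * (w + 1) * (lam div gcd r lam)"
    using lam_pos assms(2) by (intro mult_strict_right_mono) (auto simp: div_greater_zero_iff)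
  also have "\<dots> = 2 * (lam div gcd r lam * (w + 1))"
    by (simp add: algebra_simps)
  also have "\<dots> = 4 * (k - 1)"
    unfolding k[symmetric] by simp
  also have "\<dots> < 4 * k"
    using two_less_block_size by simp
  finally show "r < 4 * k" .
qed

text \<open>
  Flag-transitivity makes all blocks through \<open>x\<close> meet \<open>A\<close> in the same number of points;
  counting incidences with \<open>A\<close> then gives \<open>r |A \<inter> B| = \<lambda> |A|\<close>.
\<close>
lemma replication_dvd_lam_mult_card_invariant:
  assumes aut: "\<forall>g\<in>G. design_aut P Bl g" and flag: "flag_transitive P Bl G"
    and x: "x \<in> P" and A: "A \<subseteq> P" "x \<notin> A"
    and invariant: "\<And>g. g \<in> G \<Longrightarrow> g x = x \<Longrightarrow> g ` A \<subseteq> A"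
  shows "r dvd lam * card A"
proof -
  let ?X = "{B\<in>Bl. x \<in> B}"
  have finite_A: "finite A"
    using A(1) finite_points finite_subset by blast
  have le: "card (B \<inter> A) \<le> card (B' \<inter> A)" if "B \<in> ?X" "B' \<in> ?X" for B B'
  proof -
    have "B \<in> Bl" "x \<in> B" "B' \<in> Bl" "x \<in> B'"
      using that by auto
    then obtain g where g: "g \<in> G" "g x = x" "g ` B = B'"
      using flag unfolding flag_transitive_def by blast
    have "inj_on g P"
      using aut g(1) unfolding design_aut_def bij_betw_def by blast
    then have "inj_on g (B \<inter> A)"
      by (rule inj_on_subset) (use A(1) in blast)
    moreover have "g ` (B \<inter> A) \<subseteq> B' \<inter> A"
      using g invariant by blast
    ultimately show ?thesis
      using finite_A by (intro card_inj_on_le) auto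
  qed
  obtain B0 where B0: "B0 \<in> ?X"
    using exists_block_through[OF x] by blast
  have "lam * card A = (\<Sum>y\<in>A. card {B\<in>?X. y \<in> B})"
  proof -
    have "card {B\<in>?X. y \<in> B} = lam" if "y \<in> A" for y
    proof -
      have "{B\<in>?X. y \<in> B} = {B\<in>Bl. x \<in> B \<and> y \<in> B}" by auto
      then show ?thesis
        using that x A pair_replication[of x y] by auto
    qed
    then show ?thesis by simp
  qed
  also have "\<dots> = (\<Sum>B\<in>?X. card (B \<inter> A))"
    using sum_card_Int_eq_sum_card_incident[of ?X A id] finite_blocks finite_A by simp
  also have "\<dots> = (\<Sum>B\<in>?X. card (B0 \<inter> A))"
    using le B0 by (intro sum.cong) (auto intro: antisym)
  also have "\<dots> = r * card (B0 \<inter> A)"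
    using replication[OF x] by simp
  finally show ?thesis by simp
qed

end

definition hamming_neighbours :: "'a set \<Rightarrow> 'a \<times> 'a \<Rightarrow> ('a \<times> 'a) set" where
  "hamming_neighbours D p = {q \<in> D \<times> D. (fst q = fst p) \<noteq> (snd q = snd p)}"

lemma card_hamming_neighbours:
  assumes "finite D" "p \<in> D \<times> D"
  shows "card (hamming_neighbours D p) = 2 * (card D - 1)"
proof -
  obtain a b where p: "p = (a, b)" "a \<in> D" "b \<in> D"
    using assms(2) by auto
  then have "hamming_neighbours D p = {a} \<times> (D - {b}) \<union> (D - {a}) \<times> {b}"
    by (auto simp: hamming_neighbours_def)
  moreover have "card ({a} \<times> (D - {b}) \<union> (D - {a}) \<times> {b}) = (card D - 1) + (card D - 1)"
    using assms(1) p by (subst card_Un_disjoint) (auto simp: card_cartesian_product)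
  ultimately show ?thesis by simp
qed

lemma wreath_prod_action_hamming_neighbours:
  assumes g: "g \<in> wreath_prod_action D T0" and T0: "T0 \<subseteq> Bij D"
    and p: "p \<in> D \<times> D" and q: "q \<in> hamming_neighbours D p"
  shows "g q \<in> hamming_neighbours D (g p)"
proof -
  obtain a b c d where pq: "p = (a, b)" "q = (c, d)"
    by (cases p, cases q) simp
  with p q have "a \<in> D" "b \<in> D" "c \<in> D" "d \<in> D" "(c = a) \<noteq> (d = b)"
    by (auto simp: hamming_neighbours_def)
  have bij: "bij_betw f D D" if "f \<in> T0" for f
    using that T0 by (auto simp: Bij_def)
  from g consider (prod) g1 g2 where "g = prod_perm D g1 g2" "g1 \<in> T0" "g2 \<in> T0"
    | (swap) g1 g2 where "g = swap_perm D g1 g2" "g1 \<in> T0" "g2 \<in> T0"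
    unfolding wreath_prod_action_def base_group_def by blast
  then show ?thesis
  proof cases
    case prod
    with bij have "bij_betw g1 D D" "bij_betw g2 D D" by auto
    then show ?thesis
      using prod pq \<open>a \<in> D\<close> \<open>b \<in> D\<close> \<open>c \<in> D\<close> \<open>d \<in> D\<close> \<open>(c = a) \<noteq> (d = b)\<close>
      by (auto simp: prod_perm_def hamming_neighbours_def bij_betw_def inj_on_eq_iff)
  next
    case swap
    with bij have "bij_betw g1 D D" "bij_betw g2 D D" by auto
    then show ?thesis
      using swap pq \<open>a \<in> D\<close> \<open>b \<in> D\<close> \<open>c \<in> D\<close> \<open>d \<in> D\<close> \<open>(c = a) \<noteq> (d = b)\<close>
      by (auto simp: swap_perm_def hamming_neighbours_def bij_betw_def inj_on_eq_iff)
  qed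
qed

lemma replication_dvd_of_wreath_prod_action:
  assumes "replicated_design (D \<times> D) Bl v k lam r" and "finite D" "D \<noteq> {}"
    and "\<forall>g\<in>G. design_aut (D \<times> D) Bl g" "flag_transitive (D \<times> D) Bl G"
    and "G \<subseteq> wreath_prod_action D T0" "T0 \<subseteq> Bij D"
  shows "r dvd lam * (2 * (card D - 1))"
proof -
  interpret replicated_design "D \<times> D" Bl v k lam r by fact
  obtain x where x: "x \<in> D"
    using assms(3) by blast
  let ?N = "hamming_neighbours D (x, x)"
  have "r dvd lam * card ?N"
  proof (rule replication_dvd_lam_mult_card_invariant[OF assms(4,5)])
    show "(x, x) \<in> D \<times> D" "?N \<subseteq> D \<times> D" "(x, x) \<notin> ?N"
      using x by (auto simp: hamming_neighbours_def)
    fix g assume "g \<in> G" "g (x, x) = (x, x)"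
    then show "g ` ?N \<subseteq> ?N"
      using wreath_prod_action_hamming_neighbours[of g D T0 "(x, x)"] assms(6,7) x by auto
  qed
  then show ?thesis
    using card_hamming_neighbours[OF assms(2)] x by simp
qed

theorem lemma2p1:
  fixes D :: "'a set" and Bl :: "('a \<times> 'a) set set"
    and G :: "('a \<times> 'a \<Rightarrow> 'a \<times> 'a) set" and T0 T :: "('a \<Rightarrow> 'a) set"
    and \<omega> v k lam b r :: nat
  assumes fin: "finite D" and card_D: "card D = \<omega>" and om5: "\<omega> \<ge> 5" and om_odd: "odd \<omega>"
    and des: "design_2 (D \<times> D) Bl v k lam"
    and b_def: "b = card Bl"
    and r_def: "\<forall>x\<in>D \<times> D. card {blk\<in>Bl. x \<in> blk} = r"
    and lam_ge: "lam \<ge> (gcd r lam)^2"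
    and G_sub: "subgroup G (BijGroup (D \<times> D))"
    and G_aut: "\<forall>g\<in>G. design_aut (D \<times> D) Bl g"
    and G_flag: "flag_transitive (D \<times> D) Bl G"
    and T0_sub: "subgroup T0 (BijGroup D)"
    and T0_2tr: "two_transitive D T0"
    and T_soc: "socle (perm_sub D T0) = T"
    and T_simple: "simple_group (perm_sub D T)"
    and T_nonab: "\<not> comm_group (perm_sub D T)"
    and TT_normal: "base_group D T \<lhd> perm_sub (D \<times> D) G"
    and G_wr: "G \<subseteq> wreath_prod_action D T0"
    and G_rank: "has_rank G (D \<times> D) 3"
  shows "r div gcd r lam = 2 * (\<omega> - 1)
         \<and> real k = real (lam div gcd r lam) * (real \<omega> + 1) / 2 + 1
         \<and> b < 4 * v"
proof -
  have replicated: "replicated_design (D \<times> D) Bl v k lam r"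
    unfolding replicated_design_def using des r_def by auto
  interpret replicated_design "D \<times> D" Bl v k lam r by (fact replicated)
  have v: "v = \<omega> * \<omega>" and w: "1 < \<omega>"
    using card_points fin card_D om5 by (simp_all add: card_cartesian_product)
  have "D \<noteq> {}"
    using card_D om5 by auto
  moreover have "T0 \<subseteq> Bij D"
    using subgroup.subset[OF T0_sub] by (simp add: BijGroup_def)
  ultimately have "r dvd lam * (2 * (\<omega> - 1))"
    using replication_dvd_of_wreath_prod_action[OF replicated fin _ G_aut G_flag G_wr] card_D by simp
  then have i: "r div gcd r lam = 2 * (\<omega> - 1)"
    by (rule reduced_replication_eq_of_dvd[OF v w lam_ge])
  have "2 * (k - 1) = lam div gcd r lam * (\<omega> + 1)"
    by (rule block_size_eq_of_reduced_replication[OF v w i])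
  then have "2 * (real k - 1) = real (lam div gcd r lam) * (real \<omega> + 1)"
    using arg_cong[where f = real] two_less_block_size by (fastforce simp: of_nat_diff algebra_simps)
  then have ii: "real k = real (lam div gcd r lam) * (real \<omega> + 1) / 2 + 1"
    by simp
  have "b < 4 * v"
    using card_blocks_less_four_mult[OF v w lam_ge i] b_def by simp
  with i ii show ?thesis by blast
qed

end
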